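(* For $n\ge2$, let $\sim$ be the equivalence relation on $B_n$ defined by $t\sim t'$ if and only if for every $p\in\{x_1,\dots,x_n\}$, $d_{G(t)}(p)=1\iff d_{G(t')}(p)=1$. Then $|B_n/{\sim}|=2^{n-2}$.
   Context: $B_n$ is the set of bracketings of size $n$: binary terms in which $x_1,\dots,x_n$ each occur exactly once, in this order. For $t\in B_n$, the rooted tree $G(t)$ is defined recursively: $G(x_i)$ is the single vertex $x_i$; $G(t_1t_2)$ is $G(t_1)\cup G(t_2)$ plus an edge from the leftmost variable of $t_1$ to the leftmost variable of $t_2$; it is rooted at $x_1$. $d_T(p)$ denotes the depth (distance from the root) of $p$ in $T$. *)

theory Defs
  imports Main
begin

datatype bterm = Var nat | App bterm bterm

fun leaves :: "bterm \<Rightarrow> nat list" where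
  "leaves (Var i) = [i]"
| "leaves (App t1 t2) = leaves t1 @ leaves t2"

fun leftmost :: "bterm \<Rightarrow> nat" where
  "leftmost (Var i) = i"
| "leftmost (App t1 t2) = leftmost t1"

text \<open>B_n: bracketings of size n, i.e. variables x_1..x_n each once, in order.\<close>
definition B :: "nat \<Rightarrow> bterm set" where
  "B n = {t. leaves t = [1..<n+1]}"

fun edges :: "bterm \<Rightarrow> (nat \<times> nat) set" where
  "edges (Var i) = {}"
| "edges (App t1 t2) = edges t1 \<union> edges t2 \<union> {(leftmost t1, leftmost t2)}"

definition verts :: "bterm \<Rightarrow> nat set" where
  "verts t = set (leaves t)"

fun walk :: "bterm \<Rightarrow> nat \<Rightarrow> nat \<Rightarrow> nat \<Rightarrow> bool" where
  "walk t 0 u v = (u = v \<and> u \<in> verts t)"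
| "walk t (Suc k) u v = (\<exists>w. ((u, w) \<in> edges t \<or> (w, u) \<in> edges t) \<and> walk t k w v)"

definition depth :: "bterm \<Rightarrow> nat \<Rightarrow> nat" where
  "depth t p = (LEAST k. walk t k 1 p)"

definition depth_equiv :: "nat \<Rightarrow> (bterm \<times> bterm) set" where
  "depth_equiv n = {(t, t'). t \<in> B n \<and> t' \<in> B n \<and>
     (\<forall>p \<in> {1..n}. depth t p = 1 \<longleftrightarrow> depth t' p = 1)}"

end

theory Submission
  imports Defs
begin

text \<open>The vertices at depth 1 are the neighbours of the root \<open>x\<^sub>1\<close>, i.e. the leftmost
  variables of the right arguments along the left spine of \<open>t\<close>. The second variable
  \<open>x\<^sub>2\<close> is always one of them, and conversely every set \<open>S\<close> with
  \<open>{2} \<subseteq> S \<subseteq> {2..n}\<close> arises, by induction on \<open>n\<close>: the new variable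
  \<open>x\<^sub>n\<^sub>+\<^sub>1\<close> either becomes a new right argument of the spine or is attached
  below the last one. Two bracketings are therefore equivalent iff they have the same set of
  root neighbours, and there are \<open>2\<^sup>n\<^sup>-\<^sup>2\<close> such sets.\<close>

lemma card_quotient_kernel_on:
  "card (A // {(x, y). x \<in> A \<and> y \<in> A \<and> f x = f y}) = card (f ` A)"
proof -
  have "A // {(x, y). x \<in> A \<and> y \<in> A \<and> f x = f y} = (\<lambda>b. {x \<in> A. f x = b}) ` f ` A"
    unfolding quotient_def by (auto simp: image_iff eq_commute)
  moreover have "inj_on (\<lambda>b. {x \<in> A. f x = b}) (f ` A)"
    by (auto simp: inj_on_def)
  ultimately show ?thesis by (simp add: card_image)
qed

lemma card_supersets_of_elem:
  assumes "finite A" "a \<in> A"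
  shows "card {S. a \<in> S \<and> S \<subseteq> A} = 2 ^ (card A - 1)"
proof -
  have "{S. a \<in> S \<and> S \<subseteq> A} = insert a ` Pow (A - {a})"
  proof (intro set_eqI iffI)
    fix S assume "S \<in> {S. a \<in> S \<and> S \<subseteq> A}"
    then have "S = insert a (S - {a})" "S - {a} \<in> Pow (A - {a})"
      by auto
    then show "S \<in> insert a ` Pow (A - {a})"
      by (rule image_eqI)
  qed (use assms(2) in auto)
  moreover have "inj_on (insert a) (Pow (A - {a}))"
    by (auto simp: inj_on_def)
  ultimately show ?thesis
    using assms by (simp add: card_image card_Pow)
qed

lemma Least_eq_1_iff:
  assumes "\<exists>k. P k"
  shows "(LEAST k::nat. P k) = 1 \<longleftrightarrow> P 1 \<and> \<not> P 0"
  by (metis LeastI Least_Suc Least_eq_0 One_nat_def assms zero_neq_one)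

lemma leaves_not_Nil: "leaves t \<noteq> []"
  by (induction t) auto

lemma leftmost_eq_hd_leaves: "leftmost t = hd (leaves t)"
  by (induction t) (auto simp: leaves_not_Nil)

lemma leftmost_in_leaves: "leftmost t \<in> set (leaves t)"
  by (simp add: leftmost_eq_hd_leaves leaves_not_Nil)

lemma edges_subset_leaves: "edges t \<subseteq> set (leaves t) \<times> set (leaves t)"
  by (induction t) (auto simp: leftmost_in_leaves)

lemma edges_irrefl: "distinct (leaves t) \<Longrightarrow> (u, u) \<notin> edges t"
  by (induction t) (use leftmost_in_leaves in fastforce)+

definition neighbours :: "bterm \<Rightarrow> nat \<Rightarrow> nat set" where
  "neighbours t u = {v. (u, v) \<in> edges t \<or> (v, u) \<in> edges t}"

lemma neighbours_subset_leaves: "neighbours t u \<subseteq> set (leaves t)"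
  using edges_subset_leaves by (fastforce simp: neighbours_def)

lemma neighbours_leftmost_App:
  assumes "distinct (leaves (App t1 t2))"
  shows "neighbours (App t1 t2) (leftmost t1) = insert (leftmost t2) (neighbours t1 (leftmost t1))"
proof -
  have "leftmost t1 \<notin> set (leaves t2)"
    using assms leftmost_in_leaves[of t1] by auto
  then have "(leftmost t1, v) \<notin> edges t2 \<and> (v, leftmost t1) \<notin> edges t2" for v
    using edges_subset_leaves by blast
  then show ?thesis by (auto simp: neighbours_def)
qed

lemma second_leaf_in_neighbours_leftmost:
  "Suc 0 < length (leaves t) \<Longrightarrow> leaves t ! 1 \<in> neighbours t (leftmost t)"
proof (induction t)
  case (Var i)
  then show ?case by simp
next
  case (App t1 t2)
  show ?case
  proof (cases "leaves t1")
    case (Cons a as)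
    show ?thesis
    proof (cases as)
      case Nil
      then have "leaves (App t1 t2) ! 1 = leftmost t2"
        using Cons by (simp add: leftmost_eq_hd_leaves hd_conv_nth leaves_not_Nil)
      then show ?thesis by (simp add: neighbours_def)
    next
      case (Cons b bs)
      then have "leaves (App t1 t2) ! 1 \<in> neighbours t1 (leftmost t1)"
        using App.IH(1) \<open>leaves t1 = a # as\<close> by simp
      then show ?thesis by (auto simp: neighbours_def)
    qed
  qed (simp add: leaves_not_Nil)
qed

lemma walk_1_iff: "walk t 1 u v \<longleftrightarrow> v \<in> neighbours t u"
  using edges_subset_leaves by (auto simp: neighbours_def verts_def)

lemma walk_mono:
  "edges t \<subseteq> edges t' \<Longrightarrow> verts t \<subseteq> verts t' \<Longrightarrow> walk t k u v \<Longrightarrow> walk t' k u v"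
  by (induction k arbitrary: u) auto

lemma walk_from_leftmost: "p \<in> set (leaves t) \<Longrightarrow> \<exists>k. walk t k (leftmost t) p"
proof (induction t)
  case (Var i)
  then show ?case by (intro exI[of _ 0]) (simp add: verts_def)
next
  case (App t1 t2)
  have sub1: "edges t1 \<subseteq> edges (App t1 t2)" "verts t1 \<subseteq> verts (App t1 t2)"
    and sub2: "edges t2 \<subseteq> edges (App t1 t2)" "verts t2 \<subseteq> verts (App t1 t2)"
    by (auto simp: verts_def)
  show ?case
  proof (cases "p \<in> set (leaves t1)")
    case True
    then obtain k where "walk t1 k (leftmost t1) p"
      using App.IH(1) by blast
    then have "walk (App t1 t2) k (leftmost t1) p"
      using walk_mono[OF sub1] by blast
    then show ?thesis
      unfolding leftmost.simps by blast
  next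
    case False
    then obtain k where "walk t2 k (leftmost t2) p"
      using App.IH(2) App.prems by auto
    then have "walk (App t1 t2) k (leftmost t2) p"
      using walk_mono[OF sub2] by blast
    then have "walk (App t1 t2) (Suc k) (leftmost t1) p"
      unfolding walk.simps(2) by (intro exI[of _ "leftmost t2"]) simp
    then show ?thesis
      unfolding leftmost.simps by blast
  qed
qed

lemma depth_eq_1_iff:
  assumes "distinct (leaves t)" "leftmost t = 1" "p \<in> set (leaves t)"
  shows "depth t p = 1 \<longleftrightarrow> p \<in> neighbours t 1"
proof -
  have "\<exists>k. walk t k 1 p"
    using walk_from_leftmost assms(2,3) by metis
  then have "depth t p = 1 \<longleftrightarrow> walk t 1 1 p \<and> \<not> walk t 0 1 p"
    unfolding depth_def by (rule Least_eq_1_iff)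
  moreover have "p \<in> neighbours t 1 \<Longrightarrow> p \<noteq> 1"
    using edges_irrefl[OF assms(1)] by (auto simp: neighbours_def)
  ultimately show ?thesis
    by (auto simp only: walk_1_iff walk.simps(1))
qed

lemma
  assumes "t \<in> B n"
  shows distinct_leaves_B: "distinct (leaves t)"
    and set_leaves_B: "set (leaves t) = {1..n}"
    and leftmost_B: "leftmost t = 1"
proof -
  have lv: "leaves t = [1..<n+1]"
    using assms by (simp add: B_def)
  then have "n \<noteq> 0"
    using leaves_not_Nil[of t] by (auto simp del: upt_Suc)
  with lv show "leftmost t = 1"
    by (simp add: leftmost_eq_hd_leaves upt_conv_Cons del: upt_Suc)
  from lv show "distinct (leaves t)" "set (leaves t) = {1..n}"
    by (auto simp del: upt_Suc)
qed

lemma depth_eq_1_iff_B: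
  "t \<in> B n \<Longrightarrow> p \<in> {1..n} \<Longrightarrow> depth t p = 1 \<longleftrightarrow> p \<in> neighbours t 1"
  by (rule depth_eq_1_iff) (simp_all add: distinct_leaves_B set_leaves_B leftmost_B)

lemma neighbours_root_B_subset:
  assumes "t \<in> B n"
  shows "neighbours t 1 \<subseteq> {2..n}"
proof -
  have "1 \<notin> neighbours t 1"
    using edges_irrefl[OF distinct_leaves_B[OF assms]] by (simp add: neighbours_def)
  then have "neighbours t 1 \<subseteq> {1..n} - {1}"
    using neighbours_subset_leaves[of t 1] set_leaves_B[OF assms] by blast
  also have "{1..n} - {1} = {2..n}"
    by auto
  finally show ?thesis .
qed

lemma two_in_neighbours_root_B:
  assumes "t \<in> B n" "2 \<le> n"
  shows "2 \<in> neighbours t 1"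
proof -
  have "leaves t = [1..<n+1]"
    using assms(1) by (simp add: B_def)
  then show ?thesis
    using second_leaf_in_neighbours_leftmost[of t] assms
    by (simp add: leftmost_B numeral_2_eq_2 del: upt_Suc)
qed

lemma depth_equiv_eq_neighbours_root:
  "depth_equiv n = {(t, t'). t \<in> B n \<and> t' \<in> B n \<and> neighbours t 1 = neighbours t' 1}"
proof -
  have "(\<forall>p \<in> {1..n}. depth t p = 1 \<longleftrightarrow> depth t' p = 1) \<longleftrightarrow> neighbours t 1 = neighbours t' 1"
    if "t \<in> B n" "t' \<in> B n" for t t'
  proof -
    have "neighbours t 1 \<subseteq> {1..n}" "neighbours t' 1 \<subseteq> {1..n}"
      using that neighbours_subset_leaves set_leaves_B by blast+
    then show ?thesis
      using depth_eq_1_iff_B[OF that(1)] depth_eq_1_iff_B[OF that(2)] by blast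
  qed
  then show ?thesis
    unfolding depth_equiv_def by (metis (lifting))
qed

lemma B_extend_spine:
  assumes "t \<in> B n"
  shows "App t (Var (Suc n)) \<in> B (Suc n)"
    and "neighbours (App t (Var (Suc n))) 1 = insert (Suc n) (neighbours t 1)"
proof -
  show B: "App t (Var (Suc n)) \<in> B (Suc n)"
    using assms by (simp add: B_def)
  show "neighbours (App t (Var (Suc n))) 1 = insert (Suc n) (neighbours t 1)"
    using neighbours_leftmost_App[of t "Var (Suc n)"] distinct_leaves_B[OF B] leftmost_B[OF assms]
    by simp
qed

lemma B_extend_last_argument:
  assumes "App t1 t2 \<in> B n"
  shows "App t1 (App t2 (Var (Suc n))) \<in> B (Suc n)"
    and "neighbours (App t1 (App t2 (Var (Suc n)))) 1 = neighbours (App t1 t2) 1"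
proof -
  show B: "App t1 (App t2 (Var (Suc n))) \<in> B (Suc n)"
    using assms by (simp add: B_def)
  have "leftmost t1 = 1"
    using leftmost_B[OF assms] by simp
  then show "neighbours (App t1 (App t2 (Var (Suc n)))) 1 = neighbours (App t1 t2) 1"
    using neighbours_leftmost_App[of t1 "App t2 (Var (Suc n))"] distinct_leaves_B[OF B]
      neighbours_leftmost_App[of t1 t2] distinct_leaves_B[OF assms]
    by simp
qed

lemma exists_B_neighbours_root:
  "2 \<le> n \<Longrightarrow> 2 \<in> S \<Longrightarrow> S \<subseteq> {2..n} \<Longrightarrow> \<exists>t \<in> B n. neighbours t 1 = S"
proof (induction n arbitrary: S rule: nat_induct_at_least)
  case base
  then have "S = {2}" by auto
  moreover have "App (Var 1) (Var 2) \<in> B 2"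
    by (simp add: B_def numeral_2_eq_2)
  ultimately show ?case
    by (intro bexI[of _ "App (Var 1) (Var 2)"]) (auto simp: neighbours_def)
next
  case (Suc n)
  show ?case
  proof (cases "Suc n \<in> S")
    case True
    have "2 \<in> S - {Suc n}" "S - {Suc n} \<subseteq> {2..n}"
      using Suc.hyps Suc.prems by auto
    then obtain t where t: "t \<in> B n" "neighbours t 1 = S - {Suc n}"
      using Suc.IH by metis
    then have "neighbours (App t (Var (Suc n))) 1 = S"
      using B_extend_spine(2)[OF t(1)] True by (simp add: insert_absorb)
    then show ?thesis
      using B_extend_spine(1)[OF t(1)] by (rule bexI)
  next
    case False
    then have "S \<subseteq> {2..n}"
      using Suc.prems(2) by (auto simp: le_Suc_eq)
    then obtain t where t: "t \<in> B n" "neighbours t 1 = S"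
      using Suc.IH Suc.prems(1) by metis
    then have "Suc 0 < length (leaves t)"
      using Suc.hyps by (simp add: B_def)
    then obtain t1 t2 where t12: "t = App t1 t2"
      by (cases t) auto
    then have "neighbours (App t1 (App t2 (Var (Suc n)))) 1 = S"
      using B_extend_last_argument(2) t by metis
    then show ?thesis
      using B_extend_last_argument(1) t(1) t12 by blast
  qed
qed

lemma neighbours_root_image_B:
  assumes "2 \<le> n"
  shows "(\<lambda>t. neighbours t 1) ` B n = {S. 2 \<in> S \<and> S \<subseteq> {2..n}}"
proof
  show "(\<lambda>t. neighbours t 1) ` B n \<subseteq> {S. 2 \<in> S \<and> S \<subseteq> {2..n}}"
    using neighbours_root_B_subset two_in_neighbours_root_B[OF _ assms] by blast
  show "{S. 2 \<in> S \<and> S \<subseteq> {2..n}} \<subseteq> (\<lambda>t. neighbours t 1) ` B n"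
    using exists_B_neighbours_root[OF assms] by blast
qed

theorem lemma8p5:
  fixes n :: nat
  assumes "n \<ge> 2"
  shows "card (B n // depth_equiv n) = 2 ^ (n - 2)"
proof -
  have "card (B n // depth_equiv n) = card ((\<lambda>t. neighbours t 1) ` B n)"
    unfolding depth_equiv_eq_neighbours_root by (rule card_quotient_kernel_on)
  also have "\<dots> = card {S. 2 \<in> S \<and> S \<subseteq> {2..n}}"
    using neighbours_root_image_B[OF assms] by simp
  also have "\<dots> = 2 ^ (n - 2)"
    using card_supersets_of_elem[of "{2..n}" 2] assms by simp
  finally show ?thesis .
qed

end
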